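(* Let $(M,\Sigma)$ be a measurable space, $r\ge1$, and $\mu_1,\dots,\mu_r$ non-atomic countably additive finite measures on $\Sigma$. Let $S\in\Sigma$ satisfy $\prod_{i=1}^r\mu_i(S)\neq0$. Then there exist pairwise disjoint measurable sets $R^1,\dots,R^r\subseteq S$ and a permutation $(l_1,\dots,l_r)$ of $\{1,\dots,r\}$ such that for each $k$ we have $\mu_{l_k}(R^k)=\frac1r\mu_{l_k}(S)$, and for all $j>k$ we have $\mu_{l_j}(R^k)\le\frac1r\mu_{l_j}(S)$. *)

theory Defs
  imports "HOL-Analysis.Analysis"
begin

definition is_atom :: "'a measure \<Rightarrow> 'a set \<Rightarrow> bool" where
  "is_atom M A \<longleftrightarrow> A \<in> sets M \<and> emeasure M A > 0 \<and>
     (\<forall>B\<in>sets M. B \<subseteq> A \<longrightarrow> emeasure M B = 0 \<or> emeasure M (A - B) = 0)"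

definition non_atomic :: "'a measure \<Rightarrow> bool" where
  "non_atomic M \<longleftrightarrow> (\<nexists>A. is_atom M A)"

end

theory Submission
  imports Defs
begin

text \<open>
The sets are chosen greedily. Given targets \<open>c i \<le> \<mu>\<^sub>i(T)\<close>, some subset of \<open>T\<close> meets one target
exactly and exceeds none: take such a set for all measures but one and, if it is too large for the
last measure, shrink it inside itself (Sierpinski: a non-atomic finite measure takes every value
between \<open>0\<close> and \<open>\<mu>(A)\<close> on subsets of \<open>A\<close>); shrinking only decreases the other measures. With
\<open>c i = \<mu>\<^sub>i(S) / r\<close>, the measure met exactly is removed; every other measure lost at most \<open>c i\<close>,
so the rest of \<open>S\<close> still carries \<open>(r - 1) c i\<close> of it, and induction on the number of measures
finishes the construction.
\<close>

lemma (in finite_measure) non_atomic_subset_le_half: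
  assumes "non_atomic M" and A: "A \<in> sets M" and "0 < measure M A"
  shows "\<exists>B\<in>sets M. B \<subseteq> A \<and> 0 < measure M B \<and> measure M B \<le> measure M A / 2"
proof -
  have "\<not> is_atom M A" "emeasure M A > 0"
    using assms by (auto simp: non_atomic_def emeasure_eq_measure)
  then obtain B where B: "B \<in> sets M" "B \<subseteq> A" "0 < measure M B" "0 < measure M (A - B)"
    using A by (auto simp: is_atom_def emeasure_eq_measure zero_less_measure_iff)
  have "measure M (A - B) = measure M A - measure M B"
    using finite_measure_Diff A B by blast
  then show ?thesis
  proof (cases "measure M B \<le> measure M A / 2")
    case False
    with \<open>measure M (A - B) = _\<close> A B show ?thesis by (intro bexI[of _ "A - B"]) auto
  qed (use B in blast)
qed

lemma (in finite_measure) non_atomic_small_subset: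
  assumes na: "non_atomic M" and A: "A \<in> sets M" and pos: "0 < measure M A" and e: "0 < e"
  shows "\<exists>B\<in>sets M. B \<subseteq> A \<and> 0 < measure M B \<and> measure M B < e"
proof -
  have halves: "\<exists>B\<in>sets M. B \<subseteq> A \<and> 0 < measure M B \<and> measure M B \<le> measure M A / 2 ^ n" for n
  proof (induction n)
    case 0
    show ?case using A pos by auto
  next
    case (Suc n)
    then obtain B where B: "B \<in> sets M" "B \<subseteq> A" "0 < measure M B" "measure M B \<le> measure M A / 2 ^ n"
      by blast
    then obtain C where "C \<in> sets M" "C \<subseteq> B" "0 < measure M C" "measure M C \<le> measure M B / 2"
      using non_atomic_subset_le_half[OF na] by blast
    with B show ?case by (intro bexI[of _ C]) auto
  qed
  obtain n where "(1 / 2 :: real) ^ n < e / measure M A"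
    using real_arch_pow_inv[of "e / measure M A" "1 / 2"] e pos by auto
  then have "measure M A * (1 / 2) ^ n < e"
    using pos by (simp add: less_divide_eq mult.commute)
  then have "measure M A / 2 ^ n < e"
    by (simp add: power_one_over)
  moreover obtain B where "B \<in> sets M" "B \<subseteq> A" "0 < measure M B" "measure M B \<le> measure M A / 2 ^ n"
    using halves by blast
  ultimately show ?thesis
    by (intro bexI[of _ B]) auto
qed

lemma (in finite_measure) exists_half_maximal_member:
  assumes "F \<noteq> {}"
  shows "\<exists>C\<in>F. \<forall>D\<in>F. measure M D \<le> 2 * measure M C"
proof -
  define s where "s = Sup (measure M ` F)"
  have bdd: "bdd_above (measure M ` F)"
    using bounded_measure by (auto intro!: bdd_aboveI)
  have le_s: "measure M D \<le> s" if "D \<in> F" for D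
    unfolding s_def using that bdd by (auto intro: cSup_upper)
  show ?thesis
  proof (cases "s \<le> 0")
    case True
    with assms le_s show ?thesis
      by (meson dual_order.trans measure_nonneg mult_nonneg_nonneg zero_le_numeral ex_in_conv)
  next
    case False
    then have "s / 2 < Sup (measure M ` F)" by (simp add: s_def)
    then have "\<exists>C\<in>F. s / 2 < measure M C"
      using less_cSup_iff[OF _ bdd] assms by blast
    with le_s show ?thesis by force
  qed
qed

lemma (in finite_measure) incseq_measure_Diff_Suc_tendsto_0:
  assumes "incseq B" "range B \<subseteq> sets M"
  shows "(\<lambda>n. measure M (B (Suc n) - B n)) \<longlonglongrightarrow> 0"
proof -
  have lim: "(\<lambda>n. measure M (B n)) \<longlonglongrightarrow> measure M (\<Union>n. B n)"
    using assms by (intro finite_Lim_measure_incseq)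
  have "measure M (B (Suc n) - B n) = measure M (B (Suc n)) - measure M (B n)" for n
    using assms by (intro finite_measure_Diff) (auto simp: incseq_Suc_iff)
  with tendsto_diff[OF LIMSEQ_Suc[OF lim] lim] show ?thesis
    by simp
qed

lemma (in finite_measure) exists_saturated_subset:
  assumes c: "0 \<le> c"
  shows "\<exists>U\<in>sets M. U \<subseteq> A \<and> measure M U \<le> c \<and>
    (\<forall>D\<in>sets M. D \<subseteq> A - U \<longrightarrow> measure M U + measure M D \<le> c \<longrightarrow> measure M D = 0)"
proof -
  define cand where "cand B = {C\<in>sets M. C \<subseteq> A - B \<and> measure M B + measure M C \<le> c}" for B
  have "\<exists>C\<in>cand B. \<forall>D\<in>cand B. measure M D \<le> 2 * measure M C" if "measure M B \<le> c" for B
    using that by (intro exists_half_maximal_member) (auto simp: cand_def)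
  then obtain f
    where f: "\<And>B. measure M B \<le> c \<Longrightarrow> f B \<in> cand B \<and> (\<forall>D\<in>cand B. measure M D \<le> 2 * measure M (f B))"
    by metis
  \<comment> \<open>Each piece added is at least half as large as any admissible one; the pieces have summable
    measures, so every piece still admissible at the limit \<open>U\<close> is null.\<close>
  define Bs where "Bs n = ((\<lambda>B. B \<union> f B) ^^ n) {}" for n
  have Bs_Suc: "Bs (Suc n) = Bs n \<union> f (Bs n)" for n
    by (simp add: Bs_def)
  have Bs: "Bs n \<in> sets M \<and> Bs n \<subseteq> A \<and> measure M (Bs n) \<le> c" for n
  proof (induction n)
    case 0
    show ?case using c by (simp add: Bs_def)
  next
    case (Suc n)
    with f have "f (Bs n) \<in> cand (Bs n)" by blast
    moreover from this Suc have "measure M (Bs (Suc n)) = measure M (Bs n) + measure M (f (Bs n))"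
      unfolding Bs_Suc by (intro finite_measure_Union) (auto simp: cand_def)
    ultimately show ?case using Suc by (auto simp: Bs_Suc cand_def)
  qed
  have f_Bs: "f (Bs n) \<in> cand (Bs n)" "\<forall>D\<in>cand (Bs n). measure M D \<le> 2 * measure M (f (Bs n))" for n
    using f Bs by blast+
  define U where "U = (\<Union>n. Bs n)"
  have U: "U \<in> sets M" "U \<subseteq> A" "\<And>n. Bs n \<subseteq> U"
    using Bs by (auto simp: U_def)
  have "incseq Bs"
    by (rule incseq_SucI) (simp add: Bs_Suc)
  then have "(\<lambda>n. measure M (Bs n)) \<longlonglongrightarrow> measure M U"
    unfolding U_def using Bs by (intro finite_Lim_measure_incseq) auto
  then have "measure M U \<le> c"
    using Bs by (intro LIMSEQ_le_const2) auto
  have "Bs (Suc n) - Bs n = f (Bs n)" for n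
    using f_Bs(1) by (auto simp: Bs_Suc cand_def)
  then have f_Bs_to_0: "(\<lambda>n. measure M (f (Bs n))) \<longlonglongrightarrow> 0"
    using incseq_measure_Diff_Suc_tendsto_0[OF \<open>incseq Bs\<close>] Bs by auto
  have "measure M D = 0" if D: "D \<in> sets M" "D \<subseteq> A - U" "measure M U + measure M D \<le> c" for D
  proof -
    have D_cand: "D \<in> cand (Bs n)" for n
      using D U finite_measure_mono[OF U(3) U(1), of n] by (auto simp: cand_def)
    have "measure M D / 2 \<le> measure M (f (Bs n))" for n
      using f_Bs(2)[of n] D_cand[of n] by fastforce
    then have "measure M D / 2 \<le> 0"
      by (intro LIMSEQ_le_const[OF f_Bs_to_0]) auto
    then show ?thesis
      using measure_nonneg[of M D] by simp
  qed
  with U \<open>measure M U \<le> c\<close> show ?thesis by blast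
qed

lemma (in finite_measure) non_atomic_subset_measure_eq:
  assumes na: "non_atomic M" and A: "A \<in> sets M" and c: "0 \<le> c" "c \<le> measure M A"
  shows "\<exists>B\<in>sets M. B \<subseteq> A \<and> measure M B = c"
proof -
  obtain U where U: "U \<in> sets M" "U \<subseteq> A" "measure M U \<le> c"
    and saturated: "\<And>D. D \<in> sets M \<Longrightarrow> D \<subseteq> A - U \<Longrightarrow> measure M U + measure M D \<le> c \<Longrightarrow> measure M D = 0"
    using exists_saturated_subset[OF c(1), where A = A] by blast
  have "measure M U = c"
  proof (rule ccontr)
    assume "measure M U \<noteq> c"
    moreover have "measure M (A - U) = measure M A - measure M U"
      using finite_measure_Diff A U by blast
    ultimately obtain D where D: "D \<in> sets M" "D \<subseteq> A - U" "0 < measure M D" "measure M D < c - measure M U"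
      using non_atomic_small_subset[OF na, of "A - U" "c - measure M U"] A U c by auto
    then have "measure M D = 0"
      by (intro saturated) auto
    with D show False by simp
  qed
  with U show ?thesis by blast
qed


lemma exists_subset_measure_eq_one_le_all:
  assumes "finite I" "I \<noteq> {}"
    and "\<And>i. i \<in> I \<Longrightarrow> sets (\<mu> i) = sets N"
    and "\<And>i. i \<in> I \<Longrightarrow> finite_measure (\<mu> i)"
    and "\<And>i. i \<in> I \<Longrightarrow> non_atomic (\<mu> i)"
    and "T \<in> sets N"
    and "\<And>i. i \<in> I \<Longrightarrow> 0 \<le> c i \<and> c i \<le> measure (\<mu> i) T"
  shows "\<exists>a\<in>I. \<exists>R\<in>sets N. R \<subseteq> T \<and> measure (\<mu> a) R = c a \<and> (\<forall>i\<in>I. measure (\<mu> i) R \<le> c i)"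
  using assms
proof (induction I rule: finite_ne_induct)
  case (singleton x)
  then obtain R where "R \<in> sets (\<mu> x)" "R \<subseteq> T" "measure (\<mu> x) R = c x"
    using finite_measure.non_atomic_subset_measure_eq[of "\<mu> x" T "c x"] by auto
  with singleton.prems show ?case by auto
next
  case (insert x F)
  have "\<exists>a\<in>F. \<exists>R\<in>sets N. R \<subseteq> T \<and> measure (\<mu> a) R = c a \<and> (\<forall>i\<in>F. measure (\<mu> i) R \<le> c i)"
    using insert.prems by (intro insert.IH) auto
  then obtain a R where aR: "a \<in> F" "R \<in> sets N" "R \<subseteq> T" "measure (\<mu> a) R = c a"
    "\<forall>i\<in>F. measure (\<mu> i) R \<le> c i"
    by blast
  show ?case
  proof (cases "measure (\<mu> x) R \<le> c x")
    case True
    with aR show ?thesis by (intro bexI[of _ a] bexI[of _ R]) auto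
  next
    case False
    with insert.prems aR obtain R' where R': "R' \<in> sets N" "R' \<subseteq> R" "measure (\<mu> x) R' = c x"
      using finite_measure.non_atomic_subset_measure_eq[of "\<mu> x" R "c x"] by auto
    have "measure (\<mu> i) R' \<le> c i" if "i \<in> F" for i
    proof -
      have "measure (\<mu> i) R' \<le> measure (\<mu> i) R"
        using insert.prems that R' aR by (intro finite_measure.finite_measure_mono) auto
      with aR that show ?thesis by force
    qed
    with R' aR show ?thesis by (intro bexI[of _ x] bexI[of _ R']) auto
  qed
qed

definition ordered_shares ::
    "'a measure \<Rightarrow> (nat \<Rightarrow> 'a measure) \<Rightarrow> (nat \<Rightarrow> real) \<Rightarrow> 'a set \<Rightarrow> nat set \<Rightarrow> (nat \<Rightarrow> nat) \<Rightarrow> (nat \<Rightarrow> 'a set) \<Rightarrow> bool"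
  where "ordered_shares N \<mu> c T K l R \<longleftrightarrow>
    (\<forall>k\<in>K. R k \<in> sets N \<and> R k \<subseteq> T) \<and> disjoint_family_on R K \<and>
    (\<forall>k\<in>K. measure (\<mu> (l k)) (R k) = c (l k)) \<and>
    (\<forall>k\<in>K. \<forall>j\<in>K. k < j \<longrightarrow> measure (\<mu> (l j)) (R k) \<le> c (l j))"

lemma ordered_shares_insert:
  assumes shares: "ordered_shares N \<mu> c (T - R0) K l R" and K: "\<forall>k\<in>K. k0 < k"
    and "R0 \<in> sets N" "R0 \<subseteq> T" "measure (\<mu> a) R0 = c a"
    and "\<forall>k\<in>K. measure (\<mu> (l k)) R0 \<le> c (l k)"
  shows "ordered_shares N \<mu> c T (insert k0 K) (l(k0 := a)) (R(k0 := R0))"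
proof -
  have "k0 \<notin> K" using K by blast
  moreover have "disjoint_family_on (R(k0 := R0)) (insert k0 K)"
    using shares \<open>k0 \<notin> K\<close> unfolding ordered_shares_def disjoint_family_on_def by auto
  ultimately show ?thesis
    using assms unfolding ordered_shares_def by auto
qed

lemma bij_betw_fun_upd_insert:
  assumes "bij_betw f A B" "x \<notin> A" "y \<notin> B"
  shows "bij_betw (f(x := y)) (insert x A) (insert y B)"
proof -
  have "bij_betw (f(x := y)) A B = bij_betw f A B"
    using assms(2) by (intro bij_betw_cong) auto
  then show ?thesis
    using notIn_Un_bij_betw3[of x A "f(x := y)" B] assms by simp
qed

lemma exists_ordered_shares:
  assumes "finite I" "card I = n"
    and "\<And>i. i \<in> I \<Longrightarrow> sets (\<mu> i) = sets N"
    and "\<And>i. i \<in> I \<Longrightarrow> finite_measure (\<mu> i)"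
    and "\<And>i. i \<in> I \<Longrightarrow> non_atomic (\<mu> i)"
    and "T \<in> sets N"
    and "\<And>i. i \<in> I \<Longrightarrow> 0 \<le> c i \<and> real n * c i \<le> measure (\<mu> i) T"
  shows "\<exists>l R. bij_betw l {m..<m + n} I \<and> ordered_shares N \<mu> c T {m..<m + n} l R"
  using assms
proof (induction n arbitrary: I T m)
  case 0
  then show ?case by (auto simp: ordered_shares_def disjoint_family_on_def)
next
  case (Suc n)
  have "I \<noteq> {}" using Suc.prems(2) by auto
  moreover have "0 \<le> c i \<and> c i \<le> measure (\<mu> i) T" if "i \<in> I" for i
  proof -
    have "0 \<le> c i" "real (Suc n) * c i \<le> measure (\<mu> i) T"
      using Suc.prems(7)[OF that] by auto
    moreover have "c i \<le> real (Suc n) * c i"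
      using \<open>0 \<le> c i\<close> by (simp add: algebra_simps)
    ultimately show ?thesis by linarith
  qed
  ultimately obtain a R0 where a: "a \<in> I"
    and R0: "R0 \<in> sets N" "R0 \<subseteq> T" "measure (\<mu> a) R0 = c a" "\<forall>i\<in>I. measure (\<mu> i) R0 \<le> c i"
    using exists_subset_measure_eq_one_le_all[of I \<mu> N T c] Suc.prems by blast
  have "real n * c i \<le> measure (\<mu> i) (T - R0)" if "i \<in> I - {a}" for i
  proof -
    have "measure (\<mu> i) (T - R0) = measure (\<mu> i) T - measure (\<mu> i) R0"
      using Suc.prems that R0 by (intro finite_measure.finite_measure_Diff) auto
    with Suc.prems(7)[of i] R0(4) that show ?thesis by (auto simp: algebra_simps)
  qed
  with Suc.prems a R0 obtain l R where l: "bij_betw l {Suc m..<Suc m + n} (I - {a})"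
    and shares: "ordered_shares N \<mu> c (T - R0) {Suc m..<Suc m + n} l R"
    using Suc.IH[of "I - {a}" "T - R0" "Suc m"] by auto
  have "bij_betw (l(m := a)) (insert m {Suc m..<Suc m + n}) (insert a (I - {a}))"
    using l by (intro bij_betw_fun_upd_insert) auto
  moreover have "ordered_shares N \<mu> c T (insert m {Suc m..<Suc m + n}) (l(m := a)) (R(m := R0))"
    using shares R0 l by (intro ordered_shares_insert) (auto simp: bij_betw_def)
  moreover have "{m..<m + Suc n} = insert m {Suc m..<Suc m + n}" "insert a (I - {a}) = I"
    using a by auto
  ultimately show ?case
    by metis
qed

theorem lemma9:
  fixes N :: "'a measure" and \<mu> :: "nat \<Rightarrow> 'a measure" and r :: nat and S :: "'a set"
  assumes r: "r \<ge> 1"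
    and sets_eq: "\<And>i. i \<in> {1..r} \<Longrightarrow> sets (\<mu> i) = sets N"
    and fin: "\<And>i. i \<in> {1..r} \<Longrightarrow> finite_measure (\<mu> i)"
    and na: "\<And>i. i \<in> {1..r} \<Longrightarrow> non_atomic (\<mu> i)"
    and S: "S \<in> sets N"
    and prod: "(\<Prod>i\<in>{1..r}. measure (\<mu> i) S) \<noteq> 0"
  shows "\<exists>R :: nat \<Rightarrow> 'a set. \<exists>l :: nat \<Rightarrow> nat.
           l permutes {1..r} \<and>
           (\<forall>k\<in>{1..r}. R k \<in> sets N \<and> R k \<subseteq> S) \<and>
           disjoint_family_on R {1..r} \<and>
           (\<forall>k\<in>{1..r}. measure (\<mu> (l k)) (R k) = measure (\<mu> (l k)) S / real r) \<and>
           (\<forall>k\<in>{1..r}. \<forall>j\<in>{1..r}. k < j \<longrightarrow>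
              measure (\<mu> (l j)) (R k) \<le> measure (\<mu> (l j)) S / real r)"
proof -
  define c where "c i = measure (\<mu> i) S / real r" for i
  have "real r * c i = measure (\<mu> i) S" for i
    using r by (simp add: c_def)
  then obtain l R where l: "bij_betw l {1..<1 + r} {1..r}" and R: "ordered_shares N \<mu> c S {1..<1 + r} l R"
    using exists_ordered_shares[of "{1..r}" r \<mu> N S c 1] sets_eq fin na S by (auto simp: c_def)
  have "{1..<1 + r} = {1..r}" by auto
  with l have "restrict_id l {1..r} permutes {1..r}"
    by (simp add: permutes_restrict_id)
  with R \<open>{1..<1 + r} = _\<close> show ?thesis
    unfolding ordered_shares_def c_def restrict_id_def by (intro exI[of _ R] exI) auto
qed

end
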